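(* Let $n\geq 2$ and let $k$ be a positive integer with $k+2^k-1\leq n$. For every prime number $p$ with $n-2^k+1\leq p\leq (n-k-2^k+3)2^k-3$, there is an arithmetical structure $(r_1,\dots,r_n)$ on $K_n$ with $r_1=p$.
   Context: An arithmetical structure on the complete graph $K_n$ is an $n$-tuple $(r_1,r_2,\dots,r_n)$ of positive integers with $\gcd(r_1,\dots,r_n)=1$ such that $r_j$ divides $\sum_{i=1}^n r_i$ for every $j$. The entries are always listed so that $r_1\geq r_2\geq\dots\geq r_n$; thus $r_1$ is the largest value of the structure. *)

theory Defs
  imports "HOL-Computational_Algebra.Primes"
begin

text \<open>An arithmetical structure on the complete graph K_n, given as a function r on
  indices 1..n (values outside are irrelevant), listed in non-increasing order.\<close>
definition arith_structure_Kn :: "nat \<Rightarrow> (nat \<Rightarrow> nat) \<Rightarrow> bool" where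
  "arith_structure_Kn n r \<longleftrightarrow>
     (\<forall>i\<in>{1..n}. r i > 0) \<and>
     Gcd (r ` {1..n}) = 1 \<and>
     (\<forall>j\<in>{1..n}. r j dvd (\<Sum>i=1..n. r i)) \<and>
     (\<forall>i j. 1 \<le> i \<longrightarrow> i \<le> j \<longrightarrow> j \<le> n \<longrightarrow> r j \<le> r i)"

end

theory Submission
  imports Defs
begin

text \<open>Put \<open>K = 2^k\<close> and \<open>m = n + 1 - K\<close>. The bounds on \<open>p\<close> are what is needed to write
  \<open>p\<close> as a sum of \<open>m\<close> powers of two, each dividing \<open>K\<close> and one of them equal to 1: peel off
  copies of \<open>K\<close> as long as the remainder stays large enough, then lower the exponent.
  Now take \<open>p\<close> with multiplicity \<open>K - 1\<close> followed by these \<open>m\<close> powers of two. The total is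
  \<open>(K - 1) p + p = K p\<close>, which every entry divides, and the entry 1 makes the gcd 1.\<close>

lemma exists_powers_of_two_sum:
  fixes j m T :: nat
  assumes "j \<le> m" and "m \<le> T" and "T + 2 \<le> 2^j * (m + 2 - j)"
  shows "\<exists>xs. length xs = m \<and> set xs \<subseteq> (\<lambda>e. 2^e) ` {..j} \<and> sum_list xs = T"
  using assms
proof (induction "m + j" arbitrary: m j T rule: less_induct)
  case less
  show ?case
  proof (cases j)
    case 0
    with less.prems have "T = m" by simp
    then show ?thesis
      using 0 by (intro exI[of _ "replicate m 1"]) (auto simp: sum_list_replicate)
  next
    case (Suc i)
    then obtain m' where m: "m = Suc m'"
      using less.prems(1) by (cases m) auto
    have powers_mono: "(\<lambda>e. 2^e) ` {..i} \<subseteq> (\<lambda>e. (2::nat)^e) ` {..j}"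
      using Suc by auto
    consider (small) "T < 2^j + m'" | (peel) "2^j + m' \<le> T" "j \<le> m'"
      | (peel_last) "2^j + m' \<le> T" "m' = i"
      using less.prems(1) Suc m by linarith
    then show ?thesis
    proof cases
      case small
      obtain t where t: "m' = i + t"
        using less.prems(1) Suc m le_Suc_ex by auto
      \<comment> \<open>\<open>i + 1 \<le> 2^i\<close> turns \<open>T < 2^j + m'\<close> into the bound for the exponent \<open>i\<close>\<close>
      have "(i + 1) * (t + 1) \<le> 2^i * (t + 1)"
        using less_exp[of i] by (intro mult_le_mono1) (simp add: Suc_le_eq)
      then have "T + 2 \<le> 2^i * (m + 2 - i)"
        using small Suc m t by (simp add: algebra_simps)
      then have "\<exists>xs. length xs = m \<and> set xs \<subseteq> (\<lambda>e. 2^e) ` {..i} \<and> sum_list xs = T"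
        using less.prems Suc m t by (intro less.hyps) auto
      then show ?thesis
        using powers_mono by blast
    next
      case peel
      have "T - 2^j + 2 \<le> 2^j * (m' + 2 - j)"
        using less.prems(3) peel m by (simp add: Suc_diff_le algebra_simps)
      then have "\<exists>ys. length ys = m' \<and> set ys \<subseteq> (\<lambda>e. 2^e) ` {..j} \<and> sum_list ys = T - 2^j"
        using peel m by (intro less.hyps) auto
      then obtain ys where "length ys = m'" "set ys \<subseteq> (\<lambda>e. 2^e) ` {..j}" "sum_list ys = T - 2^j"
        by blast
      then show ?thesis
        using peel m by (intro exI[of _ "2^j # ys"]) auto
    next
      case peel_last
      have "T - 2^j + 2 \<le> 2^i * (m' + 2 - i)"
        using less.prems(3) peel_last Suc m by simp
      then have "\<exists>ys. length ys = m' \<and> set ys \<subseteq> (\<lambda>e. 2^e) ` {..i} \<and> sum_list ys = T - 2^j"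
        using peel_last Suc m by (intro less.hyps) auto
      then obtain ys where "length ys = m'" "set ys \<subseteq> (\<lambda>e. 2^e) ` {..i}" "sum_list ys = T - 2^j"
        by blast
      then show ?thesis
        using peel_last m powers_mono by (intro exI[of _ "2^j # ys"]) auto
    qed
  qed
qed

lemma one_mem_if_odd_or_small_sum:
  fixes xs :: "nat list"
  assumes "set xs \<subseteq> range ((^) 2)"
    and "odd (sum_list xs) \<or> sum_list xs < 2 * length xs"
  shows "1 \<in> set xs"
proof (rule ccontr)
  assume "1 \<notin> set xs"
  have even_ge_2: "even x \<and> 2 \<le> x" if "x \<in> set xs" for x
  proof -
    obtain e where "x = 2^e" "e \<noteq> 0"
      using assms(1) \<open>x \<in> set xs\<close> \<open>1 \<notin> set xs\<close> by fastforce
    then show ?thesis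
      by (simp add: self_le_power)
  qed
  have "even (sum_list xs)"
    using even_ge_2 by (induction xs) auto
  moreover have "2 * length xs \<le> sum_list xs"
    using even_ge_2 by (induction xs) force+
  ultimately show False
    using assms(2) by linarith
qed

lemma exists_powers_of_two_sum_with_one:
  fixes k m p :: nat
  assumes "prime p" and "1 \<le> k" and "k \<le> m" and "m \<le> p"
    and "p + 3 \<le> 2^k * (m + 2 - k)"
  shows "\<exists>xs. length xs = m \<and> set xs \<subseteq> (\<lambda>e. 2^e) ` {..k} \<and> sum_list xs = p \<and> 1 \<in> set xs"
proof -
  obtain xs where xs: "length xs = m" "set xs \<subseteq> (\<lambda>e. 2^e) ` {..k}" "sum_list xs = p"
    using exists_powers_of_two_sum[of k m p] assms(3-5) by auto
  have "odd p \<or> p < 2 * m"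
  proof (cases "p = 2")
    case True
    have "m \<noteq> 1"
    proof
      assume "m = 1"
      with assms(2,3) have "k = 1"
        by simp
      with assms(5) \<open>m = 1\<close> True show False
        by simp
    qed
    with assms(2,3) True show ?thesis
      by simp
  qed (use assms(1) prime_odd_nat prime_ge_2_nat[of p] in force)
  with xs have "1 \<in> set xs"
    by (intro one_mem_if_odd_or_small_sum) auto
  with xs show ?thesis
    by blast
qed

lemma arith_structure_Kn_of_list:
  fixes rs :: "nat list"
  assumes "\<forall>x\<in>set rs. 0 < x" and "Gcd (set rs) = 1"
    and "\<forall>x\<in>set rs. x dvd sum_list rs" and "sorted_wrt (\<ge>) rs"
  shows "arith_structure_Kn (length rs) (\<lambda>i. rs ! (i - 1))"
proof -
  have image: "(\<lambda>i. rs ! (i - 1)) ` {1..length rs} = set rs"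
    unfolding image_Suc_lessThan[symmetric] image_image by (auto simp: in_set_conv_nth)
  have sum: "(\<Sum>i=1..length rs. rs ! (i - 1)) = sum_list rs"
    by (simp add: sum.atLeast1_atMost_eq sum_list_sum_nth atLeast0LessThan)
  have "rs ! (j - 1) \<le> rs ! (i - 1)" if "1 \<le> i" "i \<le> j" "j \<le> length rs" for i j
    using assms(4) that by (cases "i = j") (auto simp: sorted_wrt_iff_nth_less)
  then show ?thesis
    using assms(1-3) image sum unfolding arith_structure_Kn_def by auto
qed

lemma arith_structure_Kn_from_divisor_parts:
  fixes K :: nat and xs :: "nat list"
  assumes "2 \<le> K" and "\<forall>x\<in>set xs. x dvd K" and "1 \<in> set xs"
  shows "\<exists>r. arith_structure_Kn (K - 1 + length xs) r \<and> r 1 = sum_list xs"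
proof -
  define p where "p = sum_list xs"
  define parts where "parts = rev (sort xs)"
  define rs where "rs = replicate (K - 1) p @ parts"
  have set_parts: "set parts = set xs"
    by (simp add: parts_def)
  have sum_parts: "sum_list parts = p"
    by (simp add: parts_def p_def flip: sum_mset_sum_list)
  have "0 < p"
    using assms(3) member_le_sum_list[of 1 xs] by (simp add: p_def)
  have "sum_list rs = K * p"
    using assms(1) sum_parts by (simp add: rs_def sum_list_replicate algebra_simps)
  then have dvd_sum: "\<forall>x\<in>set rs. x dvd sum_list rs"
    using assms(2) set_parts by (auto simp: rs_def)
  have positive: "\<forall>x\<in>set rs. 0 < x"
    using assms(1,2) set_parts \<open>0 < p\<close> by (auto simp: rs_def intro: dvd_pos_nat[of K])
  have gcd: "Gcd (set rs) = 1"
    using assms(3) set_parts Gcd_dvd[of 1 "set rs"] by (simp add: rs_def)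
  have "sorted_wrt (\<ge>) (replicate (K - 1) p)"
    by (metis rev_replicate sorted_replicate sorted_wrt_rev)
  then have "sorted_wrt (\<ge>) rs"
    using member_le_sum_list[of _ parts] sum_parts
    by (auto simp: rs_def parts_def sorted_wrt_append sorted_wrt_rev)
  with positive gcd dvd_sum have "arith_structure_Kn (length rs) (\<lambda>i. rs ! (i - 1))"
    by (rule arith_structure_Kn_of_list)
  moreover have "rs ! 0 = p"
    using assms(1) by (simp add: rs_def nth_append)
  ultimately show ?thesis
    by (intro exI[of _ "\<lambda>i. rs ! (i - 1)"]) (simp add: rs_def parts_def p_def)
qed

theorem proposition2p5:
  fixes n k p :: nat
  assumes "n \<ge> 2" and "k \<ge> 1" and "k + 2^k - 1 \<le> n"
    and "prime p"
    and "int n - 2^k + 1 \<le> int p"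
    and "int p \<le> (int n - int k - 2^k + 3) * 2^k - 3"
  shows "\<exists>r. arith_structure_Kn n r \<and> r 1 = p"
proof -
  define K :: nat where "K = 2^k"
  define m where "m = n + 1 - K"
  have "k < K" and "2 \<le> K"
    using less_exp[of k] self_le_power[of 2 k] assms(2) by (auto simp: K_def)
  have int_K: "2^k = int K"
    by (simp add: K_def)
  have n: "n = K - 1 + m" and "k \<le> m" and "m \<le> p"
    using assms(3,5) \<open>k < K\<close> unfolding m_def int_K K_def[symmetric] by linarith+
  have "int p + 3 \<le> int K * (int m + 2 - int k)"
    using assms(6) \<open>k < K\<close> n unfolding int_K m_def by (simp add: of_nat_diff algebra_simps)
  moreover have "int (K * (m + 2 - k)) = int K * (int m + 2 - int k)"
    using \<open>k \<le> m\<close> by (simp add: of_nat_diff)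
  ultimately have "p + 3 \<le> 2^k * (m + 2 - k)"
    unfolding K_def by linarith
  then obtain xs where xs: "length xs = m" "set xs \<subseteq> (\<lambda>e. 2^e) ` {..k}" "sum_list xs = p" "1 \<in> set xs"
    using exists_powers_of_two_sum_with_one[of p k m] assms(2,4) \<open>k \<le> m\<close> \<open>m \<le> p\<close> by auto
  then have "\<forall>x\<in>set xs. x dvd K"
    by (auto simp: K_def le_imp_power_dvd)
  with xs show ?thesis
    using arith_structure_Kn_from_divisor_parts[of K xs] \<open>2 \<le> K\<close> n by simp
qed

end
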